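(* Let $u$ be a harmonic function on $\mathbf D$ for which $C:=\sup\{u(z)\,(\log\frac{e}{1-|z|})^{-1}: z\in\mathbf D\}<\infty$. For every $\sigma>0$ there is $\tau_1=\tau_1(C,\sigma)>0$ such that: whenever $\theta\in[0,2\pi]$ and $r\in(0,1)$ satisfy $u(re^{i\theta})>\sigma\log\frac{e}{1-r}$, then $u(re^{i(\theta+\delta)})>\frac\sigma2\log\frac{e}{1-r}$ for all $|\delta|<\tau_1(1-r)$.
   Context: $\mathbf D$ is the open unit disc. *)

theory Defs
  imports "HOL-Analysis.Analysis"
begin

definition harmonic_on :: "complex set \<Rightarrow> (complex \<Rightarrow> real) \<Rightarrow> bool" where
  "harmonic_on S u \<longleftrightarrow> open S \<and>
     (\<exists>(Du :: complex \<Rightarrow> complex \<Rightarrow>\<^sub>L real) (D2u :: complex \<Rightarrow> complex \<Rightarrow>\<^sub>L (complex \<Rightarrow>\<^sub>L real)).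
        (\<forall>z\<in>S. (u has_derivative blinfun_apply (Du z)) (at z)) \<and>
        (\<forall>z\<in>S. (Du has_derivative blinfun_apply (D2u z)) (at z)) \<and>
        continuous_on S D2u \<and>
        (\<forall>z\<in>S. blinfun_apply (blinfun_apply (D2u z) 1) 1
               + blinfun_apply (blinfun_apply (D2u z) \<i>) \<i> = 0))"

end

theory Submission
  imports Defs "HOL-Complex_Analysis.Complex_Analysis"
begin

text \<open>A harmonic function \<open>u\<close> on the disc is the real part of a holomorphic function.
  On the disc of radius \<open>(1 - r)/2\<close> about \<open>z\<^sub>0 = r cis \<theta>\<close> the growth bound gives
  \<open>u < M := C (log (e/(1 - r)) + log 2) + 1\<close>, so Harnack's inequality for the positive harmonic
  function \<open>M - u\<close> yields \<open>u(z\<^sub>0) - u(w) \<le> 8 |w - z\<^sub>0|/(1 - r) \<cdot> (M - u(z\<^sub>0))\<close>.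
  As \<open>M - u(z\<^sub>0) = O(log (e/(1 - r)))\<close> and a rotation by \<open>\<delta>\<close> moves \<open>z\<^sub>0\<close> by at most \<open>|\<delta>|\<close>,
  choosing \<open>\<tau>\<^sub>1\<close> small in terms of \<open>C\<close> and \<open>\<sigma>\<close> keeps the loss below \<open>\<sigma>/2 \<cdot> log (e/(1 - r))\<close>.\<close>

section \<open>Symmetry of second derivatives\<close>

lemma has_real_derivative_along_line:
  fixes u :: "'a::real_normed_vector \<Rightarrow> real"
  assumes "(u has_derivative Du) (at (a + t *\<^sub>R h))"
  shows "((\<lambda>t. u (a + t *\<^sub>R h)) has_real_derivative Du h) (at t)"
proof -
  have "((\<lambda>t. a + t *\<^sub>R h) has_derivative (\<lambda>s. s *\<^sub>R h)) (at t)"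
    by (auto intro!: derivative_eq_intros)
  from has_derivative_compose[OF this assms]
  have "((\<lambda>t. u (a + t *\<^sub>R h)) has_derivative (\<lambda>s. s * Du h)) (at t)"
    using has_derivative_bounded_linear[OF assms] by (simp add: o_def linear_simps)
  then show ?thesis
    by (simp add: has_field_derivative_def mult_commute_abs)
qed

text \<open>The mean value theorem for \<open>t \<mapsto> u (z + k + t h) - u (z + t h) - t D2 k h\<close>, whose
  derivative is a difference of two first-order remainders of \<open>Du\<close> at \<open>z\<close>.\<close>
lemma second_difference_approx:
  fixes u :: "'a::real_normed_vector \<Rightarrow> real" and Du :: "'a \<Rightarrow> 'a \<Rightarrow>\<^sub>L real"
    and D2 :: "'a \<Rightarrow> ('a \<Rightarrow>\<^sub>L real)"
  assumes lin: "bounded_linear D2"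
    and du: "\<And>w. w \<in> ball z d \<Longrightarrow> (u has_derivative Du w) (at w)"
    and approx: "\<And>w. norm w < d \<Longrightarrow> norm (Du (z + w) - Du z - D2 w) \<le> e * norm w"
    and "e \<ge> 0"
    and hk: "norm h + norm k < d"
  shows "\<bar>u (z + h + k) - u (z + h) - u (z + k) + u z - D2 k h\<bar>
          \<le> 2 * e * (norm h + norm k) * norm h"
proof -
  define g where "g t = u (z + k + t *\<^sub>R h) - u (z + t *\<^sub>R h) - t * D2 k h" for t
  define g' where "g' t = (Du (z + (k + t *\<^sub>R h)) - Du z - D2 (k + t *\<^sub>R h)) h
      - (Du (z + t *\<^sub>R h) - Du z - D2 (t *\<^sub>R h)) h" for t
  have short: "norm (t *\<^sub>R h) \<le> norm h" "norm (k + t *\<^sub>R h) \<le> norm h + norm k"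
    if "0 \<le> t" "t \<le> 1" for t
  proof -
    have "t * norm h \<le> norm h" using that by (simp add: mult_left_le_one_le)
    then show "norm (t *\<^sub>R h) \<le> norm h" "norm (k + t *\<^sub>R h) \<le> norm h + norm k"
      using that norm_triangle_ineq[of k "t *\<^sub>R h"] by auto
  qed
  have der: "(g has_real_derivative g' t) (at t)" if "0 \<le> t" "t \<le> 1" for t
  proof -
    have "z + x \<in> ball z d" if "norm x < d" for x
      using that by (simp add: dist_norm norm_minus_commute)
    then have "z + k + t *\<^sub>R h \<in> ball z d" "z + t *\<^sub>R h \<in> ball z d"
      using short[OF that] hk norm_ge_zero[of k] by (smt (verit) add.assoc)+
    then have "(g has_real_derivative Du (z + k + t *\<^sub>R h) h - Du (z + t *\<^sub>R h) h - D2 k h) (at t)"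
      unfolding g_def
      by (intro DERIV_diff has_real_derivative_along_line du) (auto intro!: derivative_eq_intros)
    moreover have "g' t = Du (z + k + t *\<^sub>R h) h - Du (z + t *\<^sub>R h) h - D2 k h"
      using lin by (simp add: g'_def blinfun.diff_left blinfun.add_left linear_simps add.assoc)
    ultimately show ?thesis by simp
  qed
  obtain t where t: "0 < t" "t < 1" "g 1 - g 0 = g' t"
    using MVT2[of 0 1 g g'] der by auto
  have "\<bar>g' t\<bar> \<le> e * (norm h + norm k) * norm h + e * (norm h + norm k) * norm h"
  proof -
    have "\<bar>(Du (z + w) - Du z - D2 w) h\<bar> \<le> e * (norm h + norm k) * norm h"
      if "norm w \<le> norm h + norm k" for w
    proof -
      have "\<bar>(Du (z + w) - Du z - D2 w) h\<bar> \<le> norm (Du (z + w) - Du z - D2 w) * norm h"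
        using norm_blinfun by (metis real_norm_def)
      also have "\<dots> \<le> e * norm w * norm h"
        using that hk approx by (intro mult_right_mono) auto
      also have "\<dots> \<le> e * (norm h + norm k) * norm h"
        using that \<open>e \<ge> 0\<close> by (intro mult_right_mono mult_left_mono) auto
      finally show ?thesis .
    qed
    then show ?thesis
      using short t norm_ge_zero[of k] unfolding g'_def by (smt (verit))
  qed
  moreover have "u (z + h + k) - u (z + h) - u (z + k) + u z - D2 k h = g 1 - g 0"
    unfolding g_def by (simp add: add_ac)
  ultimately show ?thesis using t by (simp add: algebra_simps)
qed

lemma second_derivative_asymmetry_le:
  fixes u :: "'a::real_normed_vector \<Rightarrow> real" and Du :: "'a \<Rightarrow> 'a \<Rightarrow>\<^sub>L real"
  assumes "open S" "z \<in> S"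
    and du: "\<And>w. w \<in> S \<Longrightarrow> (u has_derivative Du w) (at w)"
    and d2: "(Du has_derivative D2) (at z)"
    and "e > 0"
  shows "\<bar>D2 k h - D2 h k\<bar> \<le> 2 * e * (norm h + norm k)^2"
proof -
  have lin: "bounded_linear D2"
    using d2 by (rule has_derivative_bounded_linear)
  obtain d1 where d1: "d1 > 0"
    "\<And>y. norm (y - z) < d1 \<Longrightarrow> norm (Du y - Du z - D2 (y - z)) \<le> e * norm (y - z)"
    using d2 \<open>e > 0\<close> unfolding has_derivative_at_alt by blast
  obtain d0 where d0: "d0 > 0" "ball z d0 \<subseteq> S"
    using assms(1,2) open_contains_ball by blast
  define d where "d = min d0 d1"
  have du': "\<And>w. w \<in> ball z d \<Longrightarrow> (u has_derivative Du w) (at w)"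
    using du d0 by (auto simp: d_def)
  have approx: "\<And>w. norm w < d \<Longrightarrow> norm (Du (z + w) - Du z - D2 w) \<le> e * norm w"
    using d1(2)[of "z + _"] by (auto simp: d_def)
  define s where "s = d / (norm h + norm k + 1)"
  have "d > 0" "norm h + norm k + 1 > 0"
    using d0 d1 by (auto simp: d_def add_nonneg_pos)
  then have s: "s > 0" "s * (norm h + norm k) < d"
    by (auto simp: s_def field_simps)
  then have hk: "norm (s *\<^sub>R h) + norm (s *\<^sub>R k) < d" "norm (s *\<^sub>R k) + norm (s *\<^sub>R h) < d"
    by (simp_all add: algebra_simps)
  note est1 = second_difference_approx[OF lin du' approx less_imp_le[OF \<open>e > 0\<close>] hk(1)]
  note est2 = second_difference_approx[OF lin du' approx less_imp_le[OF \<open>e > 0\<close>] hk(2)]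
  have "s * s * \<bar>D2 k h - D2 h k\<bar> = \<bar>D2 (s *\<^sub>R k) (s *\<^sub>R h) - D2 (s *\<^sub>R h) (s *\<^sub>R k)\<bar>"
    using lin s by (simp add: linear_simps blinfun.scaleR_left blinfun.scaleR_right abs_mult
        flip: right_diff_distrib mult.assoc)
  also have "\<dots> \<le> s * s * (2 * e * (norm h + norm k)^2)"
    using est1 est2 s(1) by (simp add: add_ac abs_le_iff power2_eq_square algebra_simps)
  finally show ?thesis
    using s(1) by simp
qed

lemma second_derivative_symmetric:
  fixes u :: "'a::real_normed_vector \<Rightarrow> real" and Du :: "'a \<Rightarrow> 'a \<Rightarrow>\<^sub>L real"
  assumes "open S" "z \<in> S"
    and du: "\<And>w. w \<in> S \<Longrightarrow> (u has_derivative Du w) (at w)"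
    and d2: "(Du has_derivative D2) (at z)"
  shows "D2 k h = D2 h k"
proof -
  have "\<bar>D2 k h - D2 h k\<bar> \<le> \<epsilon>" if "\<epsilon> > 0" for \<epsilon>
  proof -
    define c where "c = 2 * (norm h + norm k)^2"
    define e where "e = \<epsilon> / (c + 1)"
    have "c \<ge> 0" by (simp add: c_def)
    then have "e > 0" "e * c \<le> \<epsilon>"
      using \<open>\<epsilon> > 0\<close> by (auto simp: e_def field_simps)
    then show ?thesis
      using second_derivative_asymmetry_le[OF assms \<open>e > 0\<close>, of k h] by (simp add: c_def)
  qed
  then show ?thesis
    using field_le_epsilon[of "\<bar>D2 k h - D2 h k\<bar>" 0] by simp
qed

section \<open>Harmonic functions are real parts of holomorphic functions\<close>

lemma blinfun_apply_complex_expand: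
  fixes B :: "complex \<Rightarrow>\<^sub>L 'a::real_normed_vector"
  shows "B h = Re h *\<^sub>R B 1 + Im h *\<^sub>R B \<i>"
proof -
  have "h = Re h *\<^sub>R 1 + Im h *\<^sub>R \<i>"
    by (simp add: complex_eq_iff)
  then show ?thesis
    by (metis blinfun.add_right blinfun.scaleR_right)
qed

text \<open>Cauchy--Riemann for \<open>u\<^sub>x - \<i> u\<^sub>y\<close>: one equation is the symmetry of
  the Hessian, the other is Laplace's equation.\<close>
lemma has_field_derivative_complex_gradient:
  fixes u :: "complex \<Rightarrow> real" and Du :: "complex \<Rightarrow> complex \<Rightarrow>\<^sub>L real"
    and D2 :: "complex \<Rightarrow>\<^sub>L (complex \<Rightarrow>\<^sub>L real)"
  assumes "open S" "z \<in> S"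
    and du: "\<And>w. w \<in> S \<Longrightarrow> (u has_derivative Du w) (at w)"
    and d2: "(Du has_derivative D2) (at z)"
    and laplace: "D2 1 1 + D2 \<i> \<i> = 0"
  shows "((\<lambda>w. of_real (Du w 1) - \<i> * of_real (Du w \<i>)) has_field_derivative
           of_real (D2 1 1) - \<i> * of_real (D2 1 \<i>)) (at z)"
proof -
  have partial: "((\<lambda>w. Du w v) has_derivative (\<lambda>h. D2 h v)) (at z)" for v
    using bounded_linear.has_derivative[OF blinfun.bounded_linear_left d2] .
  have "((\<lambda>w. of_real (Du w 1) - \<i> * of_real (Du w \<i>)) has_derivative
          (\<lambda>h. of_real (D2 h 1) - \<i> * of_real (D2 h \<i>))) (at z)"
    by (intro derivative_eq_intros partial) (auto intro: d2)
  moreover have "D2 \<i> 1 = D2 1 \<i>"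
    by (rule second_derivative_symmetric[OF assms(1-4)])
  then have "(\<lambda>h. of_real (D2 h 1) - \<i> * of_real (D2 h \<i>))
             = (*) (of_real (D2 1 1) - \<i> * of_real (D2 1 \<i>))"
    using laplace
    by (intro ext, subst (1 2) blinfun_apply_complex_expand)
      (auto simp: complex_eq_iff blinfun.add_left blinfun.scaleR_left algebra_simps
        eq_neg_iff_add_eq_0[symmetric])
  ultimately show ?thesis
    by (simp add: has_field_derivative_def)
qed

lemma harmonic_on_Re_holomorphic:
  assumes "harmonic_on S u" "convex S"
  obtains f where "f holomorphic_on S" "\<And>z. z \<in> S \<Longrightarrow> Re (f z) = u z"
proof -
  obtain Du :: "complex \<Rightarrow> complex \<Rightarrow>\<^sub>L real" and D2 :: "complex \<Rightarrow> complex \<Rightarrow>\<^sub>L (complex \<Rightarrow>\<^sub>L real)"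
    where S: "open S"
      and du: "\<And>z. z \<in> S \<Longrightarrow> (u has_derivative Du z) (at z)"
      and d2: "\<And>z. z \<in> S \<Longrightarrow> (Du has_derivative D2 z) (at z)"
      and laplace: "\<And>z. z \<in> S \<Longrightarrow> D2 z 1 1 + D2 z \<i> \<i> = 0"
    using assms(1) unfolding harmonic_on_def by blast
  define g where "g z = of_real (Du z 1) - \<i> * of_real (Du z \<i>)" for z
  have "g holomorphic_on S"
    unfolding holomorphic_on_open[OF S] g_def
    using has_field_derivative_complex_gradient[OF S _ du d2 laplace] by blast
  then obtain F where F: "\<And>z. z \<in> S \<Longrightarrow> (F has_field_derivative g z) (at z)"
    using holomorphic_convex_primitive'[OF assms(2) S] at_within_open[OF _ S] by metis
  have zero: "((\<lambda>z. Re (F z) - u z) has_derivative (\<lambda>h. 0)) (at z)" if "z \<in> S" for z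
  proof -
    have "((\<lambda>z. Re (F z) - u z) has_derivative (\<lambda>h. Re (g z * h) - Du z h)) (at z)"
      using F[OF that] du[OF that] unfolding has_field_derivative_def
      by (intro derivative_eq_intros) auto
    moreover have "(\<lambda>h. Re (g z * h) - Du z h) = (\<lambda>h. 0)"
      by (rule ext, subst blinfun_apply_complex_expand) (simp add: g_def algebra_simps)
    ultimately show ?thesis by simp
  qed
  have "(\<lambda>z. Re (F z) - u z) constant_on S"
    using zero by (intro has_derivative_zero_connected_constant_on[where K="{}"])
      (auto intro: convex_connected assms(2) S has_derivative_at_withinI
        continuous_at_imp_continuous_on has_derivative_continuous)
  then obtain c where c: "\<And>z. z \<in> S \<Longrightarrow> Re (F z) - u z = c"
    unfolding constant_on_def by blast
  show ?thesis
  proof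
    show "(\<lambda>z. F z - of_real c) holomorphic_on S"
    proof (intro holomorphic_intros)
      show "F holomorphic_on S"
        using F holomorphic_on_open[OF S] by blast
    qed
    show "Re (F z - of_real c) = u z" if "z \<in> S" for z
      using c[OF that] by simp
  qed
qed

section \<open>Harnack's inequality\<close>

lemma norm_diff_lt_norm_add_cnj:
  fixes a b :: complex
  assumes "Re a > 0" "Re b > 0"
  shows "norm (a - b) < norm (a + cnj b)"
proof -
  have "(norm (a + cnj b))^2 - (norm (a - b))^2 = 4 * Re a * Re b"
    unfolding cmod_power2 by (simp add: power2_eq_square algebra_simps)
  then have "(norm (a - b))^2 < (norm (a + cnj b))^2"
    using assms by (smt (verit) mult_pos_pos)
  then show ?thesis
    using power2_less_imp_less norm_ge_zero by blast
qed

lemma Re_le_of_norm_diff_le_norm_add_cnj: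
  fixes a b :: complex
  assumes a: "Re a > 0" and b: "Re b > 0" and d: "0 \<le> d" "d \<le> 1"
    and n: "norm (a - b) \<le> d * norm (a + cnj b)"
  shows "Re a * (1 - d) \<le> Re b * (1 + d)"
proof (rule ccontr)
  assume "\<not> ?thesis"
  then have "(d * (Re a + Re b))^2 < (Re a - Re b)^2"
    using a b d by (intro power_strict_mono) (auto simp: algebra_simps)
  then have "d^2 * (Re a + Re b)^2 < (Re a - Re b)^2"
    by (simp only: power_mult_distrib)
  moreover have "(norm (a - b))^2 \<le> (d * norm (a + cnj b))^2"
    using n by (simp add: power_mono)
  then have "(Re a - Re b)^2 + (Im a - Im b)^2 \<le> d^2 * ((Re a + Re b)^2 + (Im a - Im b)^2)"
    by (simp add: cmod_power2 power_mult_distrib)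
  moreover have "d^2 * (Im a - Im b)^2 \<le> (Im a - Im b)^2"
    using d by (simp add: mult_left_le_one_le power_le_one)
  ultimately show False
    unfolding distrib_left by linarith
qed

text \<open>Schwarz's lemma for the composition of \<open>G\<close> with the Cayley transform of the right half
  plane that sends \<open>G z\<^sub>0\<close> to \<open>0\<close>.\<close>
lemma Schwarz_Lemma_right_half_plane:
  fixes G :: "complex \<Rightarrow> complex"
  assumes hol: "G holomorphic_on ball z0 R"
    and Gpos: "\<And>x. x \<in> ball z0 R \<Longrightarrow> Re (G x) > 0"
    and w: "w \<in> ball z0 R"
  shows "norm (G w - G z0) \<le> dist z0 w / R * norm (G w + cnj (G z0))"
proof -
  have R: "R > 0"
    using w by (auto intro: le_less_trans[OF zero_le_dist])
  have G0: "Re (G z0) > 0"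
    using Gpos R by simp
  have nz: "G x + cnj (G z0) \<noteq> 0" if "x \<in> ball z0 R" for x
  proof
    assume "G x + cnj (G z0) = 0"
    then have "Re (G x + cnj (G z0)) = 0"
      by simp
    then show False
      using Gpos[OF that] G0 by simp
  qed
  define \<phi> where "\<phi> \<zeta> = z0 + of_real R * \<zeta>" for \<zeta>
  define \<psi> where "\<psi> \<zeta> = (G (\<phi> \<zeta>) - G z0) / (G (\<phi> \<zeta>) + cnj (G z0))" for \<zeta>
  have \<phi>: "\<phi> \<zeta> \<in> ball z0 R" if "norm \<zeta> < 1" for \<zeta>
    using that R by (simp add: \<phi>_def dist_norm norm_mult)
  have "\<phi> holomorphic_on ball 0 1" "\<phi> ` ball 0 1 \<subseteq> ball z0 R"
    using \<phi> unfolding \<phi>_def by (auto intro!: holomorphic_intros)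
  from holomorphic_on_compose_gen[OF this(1) hol this(2)]
  have "\<psi> holomorphic_on ball 0 1"
    unfolding \<psi>_def o_def using nz \<phi> by (auto intro!: holomorphic_intros)
  moreover have "\<psi> 0 = 0"
    by (simp add: \<psi>_def \<phi>_def)
  moreover have "norm (\<psi> \<zeta>) < 1" if "norm \<zeta> < 1" for \<zeta>
    using norm_diff_lt_norm_add_cnj[OF Gpos[OF \<phi>[OF that]] G0]
    by (simp add: \<psi>_def norm_divide divide_less_eq)
  moreover define \<zeta> where "\<zeta> = (w - z0) / of_real R"
  moreover have "norm \<zeta> = dist z0 w / R"
    using R by (simp add: \<zeta>_def dist_norm norm_divide norm_minus_commute)
  moreover have "\<phi> \<zeta> = w"
    using R by (simp add: \<zeta>_def \<phi>_def)
  ultimately show ?thesis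
    using Schwarz_Lemma(1)[of \<psi> \<zeta>] w nz[OF w] R
    by (simp add: \<psi>_def norm_divide divide_le_eq)
qed

theorem Harnack_inequality_Re:
  fixes f :: "complex \<Rightarrow> complex"
  assumes hol: "f holomorphic_on ball z0 R"
    and bound: "\<And>w. w \<in> ball z0 R \<Longrightarrow> Re (f w) < M"
    and w: "w \<in> ball z0 R"
  shows "(M - Re (f w)) * (1 - dist z0 w / R) \<le> (M - Re (f z0)) * (1 + dist z0 w / R)"
proof -
  define G where "G x = of_real M - f x" for x
  have "G holomorphic_on ball z0 R"
    unfolding G_def using hol by (intro holomorphic_intros)
  moreover have Gpos: "Re (G x) > 0" if "x \<in> ball z0 R" for x
    using bound[OF that] by (simp add: G_def)
  ultimately have "norm (G w - G z0) \<le> dist z0 w / R * norm (G w + cnj (G z0))"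
    using w by (rule Schwarz_Lemma_right_half_plane)
  moreover have R: "dist z0 w < R" "R > 0"
    using w by (auto intro: le_less_trans[OF zero_le_dist])
  moreover have "Re (G z0) > 0"
    using Gpos R by simp
  ultimately have "Re (G w) * (1 - dist z0 w / R) \<le> Re (G z0) * (1 + dist z0 w / R)"
    by (intro Re_le_of_norm_diff_le_norm_add_cnj Gpos w) auto
  then show ?thesis
    by (simp add: G_def)
qed

section \<open>Harmonic functions of logarithmic growth\<close>

lemma norm_cis_diff_le: "norm (cis a - cis b) \<le> \<bar>a - b\<bar>"
proof -
  have "norm (cis a - cis b) \<le> 1 * norm (a - b)"
  proof (rule differentiable_bound[of UNIV cis "\<lambda>x t. t *\<^sub>R (\<i> * cis x)"])
    show "(cis has_derivative (\<lambda>t. t *\<^sub>R (\<i> * cis x))) (at x within UNIV)" for x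
      using has_derivative_cis[of "\<lambda>x. x" "\<lambda>x. x" x UNIV] by (simp add: has_derivative_ident)
    show "onorm (\<lambda>t. t *\<^sub>R (\<i> * cis x)) \<le> 1" for x
      by (rule onorm_bound) (auto simp: norm_mult)
  qed auto
  then show ?thesis by simp
qed

lemma dist_mult_cis_le: "dist (complex_of_real r * cis a) (complex_of_real r * cis b) \<le> \<bar>r\<bar> * \<bar>a - b\<bar>"
proof -
  have "dist (complex_of_real r * cis a) (complex_of_real r * cis b) = \<bar>r\<bar> * norm (cis a - cis b)"
    by (simp add: dist_norm norm_mult flip: right_diff_distrib)
  then show ?thesis
    using norm_cis_diff_le[of a b] by (simp add: mult_left_mono)
qed

lemma le_cSup_ratio_mult:
  fixes f g :: "'a \<Rightarrow> real"
  assumes "bdd_above {f z / g z | z. z \<in> S}" "z \<in> S" "g z > 0"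
  shows "f z \<le> Sup {f z / g z | z. z \<in> S} * g z"
proof -
  have "f z / g z \<le> Sup {f z / g z | z. z \<in> S}"
    using assms by (auto intro!: cSup_upper)
  then show ?thesis
    using assms(3) by (simp add: divide_le_eq)
qed

lemma ln_exp1_divide: "(x::real) > 0 \<Longrightarrow> ln (exp 1 / x) = 1 - ln x"
  using ln_div[of "exp 1" x] by simp

lemma ln_exp1_divide_ge_1: "norm z < 1 \<Longrightarrow> ln (exp 1 / (1 - norm z)) \<ge> 1"
  by (simp add: ln_exp1_divide)

lemma ln_exp1_divide_on_ball:
  fixes z0 x :: complex
  assumes "norm z0 < 1" "x \<in> ball z0 ((1 - norm z0) / 2)"
  shows "norm x < 1"
    and "ln (exp 1 / (1 - norm x)) \<le> ln (exp 1 / (1 - norm z0)) + ln 2"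
proof -
  have "norm x \<le> norm z0 + dist z0 x"
    by (metis dist_norm norm_minus_commute norm_triangle_sub)
  then have lt: "(1 - norm z0) / 2 < 1 - norm x"
    using assms by simp
  then show "norm x < 1"
    using assms(1) by simp
  have "ln (exp 1 / (1 - norm x)) \<le> 1 - ln ((1 - norm z0) / 2)"
    using lt assms(1) by (simp add: ln_exp1_divide)
  also have "\<dots> = ln (exp 1 / (1 - norm z0)) + ln 2"
    using assms(1) by (simp add: ln_exp1_divide ln_div)
  finally show "ln (exp 1 / (1 - norm x)) \<le> ln (exp 1 / (1 - norm z0)) + ln 2" .
qed

lemma le_mult_1_plus_4_of_Harnack:
  fixes a b d :: real
  assumes "b * (1 - d) \<le> a * (1 + d)" "a > 0" "0 \<le> d" "d \<le> 1/2"
  shows "b \<le> a * (1 + 4 * d)"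
proof -
  have "4 * (d * d) \<le> 2 * d"
    using mult_left_mono[OF assms(4,3)] by simp
  then have "1 + d \<le> (1 + 4 * d) * (1 - d)"
    by (simp add: algebra_simps)
  then have "a * (1 + d) \<le> a * (1 + 4 * d) * (1 - d)"
    using assms(2) by (simp add: mult.assoc)
  with assms(1) have "b * (1 - d) \<le> a * (1 + 4 * d) * (1 - d)"
    by linarith
  then show ?thesis
    by (rule mult_right_le_imp_le) (use assms(4) in simp)
qed

lemma harmonic_log_growth_Harnack:
  fixes u :: "complex \<Rightarrow> real"
  assumes "harmonic_on (ball 0 1) u" "C \<ge> 0"
    and growth: "\<And>z. z \<in> ball 0 1 \<Longrightarrow> u z \<le> C * ln (exp 1 / (1 - norm z))"
    and z0: "norm z0 < 1" "u z0 \<ge> 0" and w: "dist z0 w \<le> (1 - norm z0) / 4"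
  shows "u z0 - u w
    \<le> 8 * dist z0 w / (1 - norm z0) * (C * (1 + ln 2) + 1) * ln (exp 1 / (1 - norm z0))"
proof -
  obtain f where f: "f holomorphic_on ball 0 1" "\<And>z. z \<in> ball 0 1 \<Longrightarrow> Re (f z) = u z"
    using harmonic_on_Re_holomorphic[OF assms(1) convex_ball] by blast
  define L where "L = ln (exp 1 / (1 - norm z0))"
  define R where "R = (1 - norm z0) / 2"
  define M where "M = C * (L + ln 2) + 1"
  define d where "d = dist z0 w / R"
  have R: "R > 0" "ball z0 R \<subseteq> ball 0 1"
    using z0 ln_exp1_divide_on_ball(1)[OF z0(1)] by (auto simp: R_def)
  have below_M: "Re (f x) < M" if "x \<in> ball z0 R" for x
  proof -
    have "u x \<le> C * (L + ln 2)"
      using growth[of x] R(2) that ln_exp1_divide_on_ball(2)[OF z0(1), of x] \<open>C \<ge> 0\<close>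
      by (smt (verit, best) L_def R_def mult_left_mono subsetD)
    then show ?thesis
      using f(2) R(2) that by (auto simp: M_def)
  qed
  have d: "0 \<le> d" "d \<le> 1/2" and wR: "w \<in> ball z0 R"
    using w R by (auto simp: d_def R_def field_simps)
  have "(M - Re (f w)) * (1 - d) \<le> (M - Re (f z0)) * (1 + d)"
    unfolding d_def by (rule Harnack_inequality_Re[OF holomorphic_on_subset[OF f(1) R(2)] below_M wR])
  moreover have "w \<in> ball 0 1" "z0 \<in> ball 0 1"
    using wR R z0 by auto
  ultimately have "(M - u w) * (1 - d) \<le> (M - u z0) * (1 + d)"
    using f(2) by simp
  moreover have "M - u z0 > 0"
    using below_M[of z0] R f(2)[of z0] z0 by auto
  ultimately have "M - u w \<le> (M - u z0) * (1 + 4 * d)"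
    using d by (rule le_mult_1_plus_4_of_Harnack)
  then have "u z0 - u w \<le> 4 * d * (M - u z0)"
    by (simp add: algebra_simps)
  also have "\<dots> \<le> 4 * d * ((C * (1 + ln 2) + 1) * L)"
  proof (rule mult_left_mono)
    have "L \<ge> 1" "C * ln 2 \<ge> 0"
      using z0(1) \<open>C \<ge> 0\<close> by (simp_all add: L_def ln_exp1_divide_ge_1)
    then have "C * ln 2 \<le> C * ln 2 * L"
      using mult_left_mono[of 1 L "C * ln 2"] by simp
    then show "M - u z0 \<le> (C * (1 + ln 2) + 1) * L"
      using \<open>L \<ge> 1\<close> z0(2) by (simp add: M_def algebra_simps)
  qed (use d in simp)
  finally show ?thesis
    by (simp add: d_def R_def L_def)
qed

lemma harmonic_log_growth_stable:
  fixes u :: "complex \<Rightarrow> real"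
  assumes "harmonic_on (ball 0 1) u"
    and growth: "\<And>z. z \<in> ball 0 1 \<Longrightarrow> u z \<le> C * ln (exp 1 / (1 - norm z))"
    and \<tau>: "\<tau> \<le> 1/4" "16 * \<tau> * (\<bar>C\<bar> * (1 + ln 2) + 1) \<le> \<sigma>" and "\<sigma> > 0"
    and z0: "norm z0 < 1" "u z0 > \<sigma> * ln (exp 1 / (1 - norm z0))"
    and w: "dist z0 w \<le> \<tau> * (1 - norm z0)"
  shows "u w > \<sigma> / 2 * ln (exp 1 / (1 - norm z0))"
proof -
  define L where "L = ln (exp 1 / (1 - norm z0))"
  define A where "A = C * (1 + ln 2) + 1"
  have L: "L \<ge> 1"
    using z0(1) by (simp add: L_def ln_exp1_divide_ge_1)
  have "0 < \<sigma> * L"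
    using \<open>\<sigma> > 0\<close> L by simp
  moreover have "u z0 \<le> C * L"
    using growth[of z0] z0(1) by (simp add: L_def)
  ultimately have "\<sigma> * L < C * L" "0 < u z0"
    using z0(2) by (simp_all add: L_def)
  then have "C > 0"
    using \<open>\<sigma> > 0\<close> L by (simp add: mult_less_cancel_right)
  have "\<tau> * (1 - norm z0) \<le> 1/4 * (1 - norm z0)"
    using \<tau>(1) z0(1) by (intro mult_right_mono) auto
  with w have "u z0 - u w \<le> 8 * (dist z0 w / (1 - norm z0)) * A * L"
    using harmonic_log_growth_Harnack[OF assms(1) _ growth z0(1)] \<open>C > 0\<close> \<open>0 < u z0\<close>
    by (simp add: A_def L_def)
  also have "\<dots> \<le> 8 * \<tau> * A * L"
    using w z0(1) L \<open>C > 0\<close> by (intro mult_right_mono) (auto simp: A_def divide_le_eq)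
  also have "\<dots> \<le> \<sigma> / 2 * L"
    using \<tau>(2) \<open>C > 0\<close> L by (intro mult_right_mono) (auto simp: A_def)
  finally show ?thesis
    using z0(2) by (simp add: L_def)
qed

theorem lemma7:
  fixes C \<sigma> :: real
  assumes "\<sigma> > 0"
  shows "\<exists>\<tau>\<^sub>1 > 0. \<forall>u :: complex \<Rightarrow> real.
     harmonic_on (ball 0 1) u
     \<and> bdd_above {u z / ln (exp 1 / (1 - norm z)) | z. z \<in> ball 0 1}
     \<and> Sup {u z / ln (exp 1 / (1 - norm z)) | z. z \<in> ball 0 1} = C
     \<longrightarrow> (\<forall>\<theta> \<in> {0..2*pi}. \<forall>r \<in> {0<..<1}.
           u (complex_of_real r * cis \<theta>) > \<sigma> * ln (exp 1 / (1 - r))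
           \<longrightarrow> (\<forall>\<delta>::real. \<bar>\<delta>\<bar> < \<tau>\<^sub>1 * (1 - r)
                 \<longrightarrow> u (complex_of_real r * cis (\<theta> + \<delta>)) > \<sigma> / 2 * ln (exp 1 / (1 - r))))"
proof -
  define \<tau> where "\<tau> = min (1/4) (\<sigma> / (16 * (\<bar>C\<bar> * (1 + ln 2) + 1)))"
  have \<tau>: "\<tau> > 0" "\<tau> \<le> 1/4" "16 * \<tau> * (\<bar>C\<bar> * (1 + ln 2) + 1) \<le> \<sigma>"
    using \<open>\<sigma> > 0\<close> by (auto simp: \<tau>_def min_def field_simps add_pos_nonneg)
  show ?thesis
  proof (intro exI[of _ \<tau>] conjI \<tau>(1) allI impI ballI)
    fix u :: "complex \<Rightarrow> real" and \<theta> r \<delta> :: real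
    assume H: "harmonic_on (ball 0 1) u
     \<and> bdd_above {u z / ln (exp 1 / (1 - norm z)) | z. z \<in> ball 0 1}
     \<and> Sup {u z / ln (exp 1 / (1 - norm z)) | z. z \<in> ball 0 1} = C"
      and r: "r \<in> {0<..<1}"
      and big: "u (complex_of_real r * cis \<theta>) > \<sigma> * ln (exp 1 / (1 - r))"
      and \<delta>: "\<bar>\<delta>\<bar> < \<tau> * (1 - r)"
    have growth: "u z \<le> C * ln (exp 1 / (1 - norm z))" if "z \<in> ball 0 1" for z
      using le_cSup_ratio_mult[of u "\<lambda>z. ln (exp 1 / (1 - norm z))" "ball 0 1" z]
        H ln_exp1_divide_ge_1[of z] that exp_ge_add_one_self[of 1] norm_ge_zero[of z]
      by (simp add: mult.commute)
    have z0: "norm (complex_of_real r * cis \<theta>) = r"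
      using r by (simp add: norm_mult)
    have "dist (complex_of_real r * cis \<theta>) (complex_of_real r * cis (\<theta> + \<delta>)) \<le> \<bar>\<delta>\<bar>"
      using dist_mult_cis_le[of r \<theta> "\<theta> + \<delta>"] r mult_left_le_one_le[of "\<bar>\<delta>\<bar>" r] by auto
    with \<delta> have "dist (complex_of_real r * cis \<theta>) (complex_of_real r * cis (\<theta> + \<delta>))
        \<le> \<tau> * (1 - norm (complex_of_real r * cis \<theta>))"
      unfolding z0 by linarith
    from harmonic_log_growth_stable[OF _ growth \<tau>(2,3) \<open>\<sigma> > 0\<close> _ _ this]
    show "u (complex_of_real r * cis (\<theta> + \<delta>)) > \<sigma> / 2 * ln (exp 1 / (1 - r))"
      using H r big unfolding z0 by simp
  qed
qed

end
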